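(* Let $\mathcal{A}\in\mathbb{R}^{d\times\cdots\times d}$ be an order-$k$ real tensor with the same dimension $d$ in all modes. For every level $1\le\ell\le k$ and every partition $\pi=\{B_1,\dots,B_\ell\}\in\mathcal{P}^\ell_{[k]}$, \[ d^{-(k-\max_{i\in[\ell]}|B_i|)/2}\|\mathcal{A}\|_F\le\|\mathrm{Unfold}_\pi(\mathcal{A})\|_\sigma\le\|\mathcal{A}\|_F . \]
   Context: $\|\mathcal{A}\|_F$ is the Frobenius norm. For a real tensor $\mathcal{T}\in\mathbb{R}^{e_1\times\cdots\times e_m}$, $\|\mathcal{T}\|_\sigma=\sup\{\sum t_{i_1\dots i_m}x^{(1)}_{i_1}\cdots x^{(m)}_{i_m}:\ \mathbf{x}_n\in\mathbb{R}^{e_n},\ \|\mathbf{x}_n\|_2=1\}$. $\mathcal{P}^\ell_{[k]}$ is the set of partitions of $[k]$ into exactly $\ell$ nonempty blocks. Unfolding: for $\pi=\{B_1,\dots,B_\ell\}$, $\mathrm{Unfold}_\pi(\mathcal{A})$ is the order-$\ell$ tensor of dimensions $(d^{|B_1|},\dots,d^{|B_\ell|})$ whose entry at $(m_1,\dots,m_\ell)$ is $a_{i_1\dots i_k}$, where $m_j$ corresponds to $(i_r)_{r\in B_j}$ under a fixed bijection $[d]^{B_j}\to[d^{|B_j|}]$. *)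

theory Defs
  imports "HOL-Analysis.Analysis" "HOL-Library.Disjoint_Sets"
begin

text \<open>An order-k tensor with all dimensions d is a function on multi-indices
  i :: nat \<Rightarrow> nat, where the relevant multi-indices are
  PiE {0..<k} (\<lambda>_. {0..<d}) (modes are 0..k-1, coordinates 0..d-1).\<close>

definition frobenius_norm :: "nat \<Rightarrow> nat \<Rightarrow> ((nat \<Rightarrow> nat) \<Rightarrow> real) \<Rightarrow> real" where
  "frobenius_norm k d A = sqrt (\<Sum>i\<in>PiE {0..<k} (\<lambda>_. {0..<d}). (A i)\<^sup>2)"

definition spectral_norm :: "'m set \<Rightarrow> ('m \<Rightarrow> 'i set) \<Rightarrow> (('m \<Rightarrow> 'i) \<Rightarrow> real) \<Rightarrow> real" where
  "spectral_norm M E T = Sup {(\<Sum>i\<in>PiE M E. T i * (\<Prod>m\<in>M. x m (i m))) | x.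
      \<forall>m\<in>M. sqrt (\<Sum>j\<in>E m. (x m j)\<^sup>2) = 1}"

definition partitions_into :: "nat \<Rightarrow> nat \<Rightarrow> nat set set set" where
  "partitions_into k l = {\<pi>. partition_on {0..<k} \<pi> \<and> card \<pi> = l}"

text \<open>Unfolding along a partition: one mode per block B, indexed by the
  multi-indices in PiE B (\<lambda>_. {0..<d}) (a set of size d^|B|).\<close>

definition unfold :: "nat \<Rightarrow> nat set set \<Rightarrow> ((nat \<Rightarrow> nat) \<Rightarrow> real) \<Rightarrow> (nat set \<Rightarrow> (nat \<Rightarrow> nat)) \<Rightarrow> real" where
  "unfold k \<pi> A = (\<lambda>I. A (\<lambda>r. if r < k then I (THE B. B \<in> \<pi> \<and> r \<in> B) r else undefined))"

definition unfold_spectral_norm :: "nat \<Rightarrow> nat \<Rightarrow> nat set set \<Rightarrow> ((nat \<Rightarrow> nat) \<Rightarrow> real) \<Rightarrow> real" where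
  "unfold_spectral_norm k d \<pi> A =
     spectral_norm \<pi> (\<lambda>B. PiE B (\<lambda>_. {0..<d})) (unfold k \<pi> A)"

end

theory Submission
  imports Defs
begin

text \<open>The upper bound is Cauchy-Schwarz: a product of unit vectors is a unit vector of the
  product index set, so every value of the multilinear form is at most the Frobenius norm.
  For the lower bound fix a block B and split the squared Frobenius norm into the
  d^(k - |B|) fibres along the mode B. Each fibre norm is itself a value of the multilinear form:
  use the normalised fibre in mode B and point masses at the fibre's position in all other modes.
  Hence the Frobenius norm is at most d^((k - |B|)/2) times the spectral norm; take B of maximal size.\<close>

definition multilinear_form ::
    "'m set \<Rightarrow> ('m \<Rightarrow> 'i set) \<Rightarrow> (('m \<Rightarrow> 'i) \<Rightarrow> real) \<Rightarrow> ('m \<Rightarrow> 'i \<Rightarrow> real) \<Rightarrow> real" where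
  "multilinear_form M E T x = (\<Sum>i\<in>PiE M E. T i * (\<Prod>m\<in>M. x m (i m)))"

lemma spectral_norm_eq_Sup:
  "spectral_norm M E T = Sup {multilinear_form M E T x | x. \<forall>m\<in>M. L2_set (x m) (E m) = 1}"
  by (simp add: spectral_norm_def multilinear_form_def L2_set_def)

lemma L2_set_indicator_singleton:
  assumes "finite S" and "s \<in> S"
  shows "L2_set (indicator {s}) S = 1"
  using assms by (simp add: L2_set_def indicator_def power2_eq_square)

lemma unit_vector_attaining_L2_set:
  fixes v :: "'a \<Rightarrow> real"
  assumes S: "finite S" "S \<noteq> {}"
  obtains y where "L2_set y S = 1" and "(\<Sum>j\<in>S. v j * y j) = L2_set v S"
proof (cases "L2_set v S = 0")
  case True
  obtain s where s: "s \<in> S" using S by blast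
  have "v s = 0" using True s S by (simp add: L2_set_eq_0_iff)
  with s S have "(\<Sum>j\<in>S. v j * indicator {s} j) = L2_set v S"
    by (simp add: True indicator_def)
  with L2_set_indicator_singleton[OF S(1) s] show thesis by (rule that)
next
  case False
  then have pos: "L2_set v S > 0" using L2_set_nonneg[of v S] by linarith
  have "L2_set (\<lambda>j. v j / L2_set v S) S = 1"
    using pos L2_set_left_distrib[of "inverse (L2_set v S)" v S] by (simp add: divide_inverse)
  moreover have "(\<Sum>j\<in>S. v j * (v j / L2_set v S)) = L2_set v S"
  proof -
    have "(\<Sum>j\<in>S. v j * (v j / L2_set v S)) = (L2_set v S)\<^sup>2 / L2_set v S"
      by (simp add: L2_set_def sum_divide_distrib power2_eq_square sum_nonneg)
    then show ?thesis using pos by (simp add: power2_eq_square)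
  qed
  ultimately show thesis by (rule that)
qed

lemma multilinear_form_le_L2_set:
  assumes M: "finite M" and E: "\<And>m. m \<in> M \<Longrightarrow> finite (E m)"
    and x: "\<forall>m\<in>M. L2_set (x m) (E m) = 1"
  shows "multilinear_form M E T x \<le> L2_set T (PiE M E)"
proof -
  let ?p = "\<lambda>i. \<Prod>m\<in>M. x m (i m)"
  have "(L2_set ?p (PiE M E))\<^sup>2 = (\<Sum>i\<in>PiE M E. \<Prod>m\<in>M. (x m (i m))\<^sup>2)"
    by (simp add: L2_set_def sum_nonneg prod_nonneg prod_power_distrib)
  also have "\<dots> = (\<Prod>m\<in>M. (L2_set (x m) (E m))\<^sup>2)"
    using M E by (simp add: prod_sum_PiE L2_set_def sum_nonneg)
  also have "\<dots> = 1" using x by simp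
  finally have "L2_set ?p (PiE M E) = 1"
    using L2_set_nonneg[of ?p "PiE M E"] by (auto simp: power2_eq_1_iff)
  moreover have "multilinear_form M E T x \<le> (\<Sum>i\<in>PiE M E. \<bar>T i\<bar> * \<bar>?p i\<bar>)"
    unfolding multilinear_form_def by (intro sum_mono) (simp add: abs_mult[symmetric])
  ultimately show ?thesis using L2_set_mult_ineq[of T ?p "PiE M E"] by simp
qed

lemma unit_vectors_exist:
  assumes "\<And>m. m \<in> M \<Longrightarrow> finite (E m)" and "\<And>m. m \<in> M \<Longrightarrow> E m \<noteq> {}"
  shows "\<exists>x. \<forall>m\<in>M. L2_set (x m) (E m) = 1"
proof -
  have "\<forall>m\<in>M. \<exists>y. L2_set y (E m) = 1"
    using assms unit_vector_attaining_L2_set[of "E _" "\<lambda>_. 0"] by metis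
  then show ?thesis by (rule bchoice)
qed

lemma spectral_norm_le_L2_set:
  assumes "finite M" and "\<And>m. m \<in> M \<Longrightarrow> finite (E m)" and "\<And>m. m \<in> M \<Longrightarrow> E m \<noteq> {}"
  shows "spectral_norm M E T \<le> L2_set T (PiE M E)"
  unfolding spectral_norm_eq_Sup
  using unit_vectors_exist[of M E] multilinear_form_le_L2_set[of M E] assms
  by (intro cSup_least) auto

lemma multilinear_form_le_spectral_norm:
  assumes "finite M" and "\<And>m. m \<in> M \<Longrightarrow> finite (E m)"
    and "\<forall>m\<in>M. L2_set (x m) (E m) = 1"
  shows "multilinear_form M E T x \<le> spectral_norm M E T"
  unfolding spectral_norm_eq_Sup
proof (rule cSup_upper)
  show "multilinear_form M E T x \<in> {multilinear_form M E T y | y. \<forall>m\<in>M. L2_set (y m) (E m) = 1}"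
    using assms(3) by blast
  show "bdd_above {multilinear_form M E T y | y. \<forall>m\<in>M. L2_set (y m) (E m) = 1}"
    using multilinear_form_le_L2_set[OF assms(1,2)] by (auto intro!: bdd_aboveI)
qed

lemma sum_PiE_split_coordinate:
  assumes "m0 \<in> M"
  shows "(\<Sum>i\<in>PiE M E. f i) = (\<Sum>c\<in>PiE (M - {m0}) E. \<Sum>j\<in>E m0. f (c(m0 := j)))"
proof -
  have "PiE M E = (\<lambda>(j, c). c(m0 := j)) ` (E m0 \<times> PiE (M - {m0}) E)"
    using PiE_insert_eq[of m0 "M - {m0}" E] assms by (simp add: insert_absorb)
  moreover have "inj_on (\<lambda>(j, c). c(m0 := j)) (E m0 \<times> PiE (M - {m0}) E)"
    by (rule inj_combinator) simp
  ultimately have "(\<Sum>i\<in>PiE M E. f i) = (\<Sum>(j, c)\<in>E m0 \<times> PiE (M - {m0}) E. f (c(m0 := j)))"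
    by (simp add: sum.reindex case_prod_unfold)
  then show ?thesis by (simp add: sum.cartesian_product[symmetric] sum.swap[of _ "E m0"])
qed

lemma multilinear_form_point_masses:
  assumes M: "finite M" and m0: "m0 \<in> M" and c: "c \<in> PiE (M - {m0}) E"
    and E: "\<And>m. m \<in> M \<Longrightarrow> finite (E m)"
  shows "multilinear_form M E T (\<lambda>m. if m = m0 then y else indicator {c m})
       = (\<Sum>j\<in>E m0. T (c(m0 := j)) * y j)"
proof -
  let ?R = "PiE (M - {m0}) E"
  have factor: "(\<Prod>m\<in>M. (if m = m0 then y else indicator {c m}) ((c'(m0 := j)) m))
      = y j * of_bool (c' = c)" if c': "c' \<in> ?R" for c' j
  proof -
    have "(\<Prod>m\<in>M - {m0}. indicator {c m} (c' m) :: real) = of_bool (\<forall>m\<in>M - {m0}. c' m = c m)"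
      using M by force
    also have "(\<forall>m\<in>M - {m0}. c' m = c m) \<longleftrightarrow> c' = c"
      using c c' by (auto intro: PiE_ext)
    finally show ?thesis
      using M m0 by (simp add: prod.remove)
  qed
  have "multilinear_form M E T (\<lambda>m. if m = m0 then y else indicator {c m})
      = (\<Sum>c'\<in>?R. \<Sum>j\<in>E m0. T (c'(m0 := j)) * (y j * of_bool (c' = c)))"
    unfolding multilinear_form_def sum_PiE_split_coordinate[OF m0]
    by (intro sum.cong refl) (simp add: factor del: fun_upd_apply)
  also have "\<dots> = (\<Sum>c'\<in>?R. if c' = c then (\<Sum>j\<in>E m0. T (c(m0 := j)) * y j) else 0)"
    by (intro sum.cong) auto
  also have "\<dots> = (\<Sum>j\<in>E m0. T (c(m0 := j)) * y j)"
    using c M E by (subst sum.delta) (auto intro!: finite_PiE)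
  finally show ?thesis .
qed

lemma fibre_L2_set_le_spectral_norm:
  assumes M: "finite M" and m0: "m0 \<in> M" and c: "c \<in> PiE (M - {m0}) E"
    and E: "\<And>m. m \<in> M \<Longrightarrow> finite (E m)" "\<And>m. m \<in> M \<Longrightarrow> E m \<noteq> {}"
  shows "L2_set (\<lambda>j. T (c(m0 := j))) (E m0) \<le> spectral_norm M E T"
proof -
  obtain y where y: "L2_set y (E m0) = 1"
    and attains: "(\<Sum>j\<in>E m0. T (c(m0 := j)) * y j) = L2_set (\<lambda>j. T (c(m0 := j))) (E m0)"
    by (rule unit_vector_attaining_L2_set[OF E(1)[OF m0] E(2)[OF m0], where v = "\<lambda>j. T (c(m0 := j))"])
  define x where "x = (\<lambda>m. if m = m0 then y else indicator {c m})"
  have unit: "\<forall>m\<in>M. L2_set (x m) (E m) = 1"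
    using y c E(1) by (auto simp: x_def intro: L2_set_indicator_singleton)
  have "multilinear_form M E T x \<le> spectral_norm M E T"
    by (rule multilinear_form_le_spectral_norm[OF M E(1) unit])
  then show ?thesis
    by (simp add: x_def multilinear_form_point_masses[OF M m0 c E(1)] attains)
qed

lemma L2_set_le_spectral_norm:
  assumes M: "finite M" and m0: "m0 \<in> M"
    and E: "\<And>m. m \<in> M \<Longrightarrow> finite (E m)" "\<And>m. m \<in> M \<Longrightarrow> E m \<noteq> {}"
  shows "L2_set T (PiE M E) \<le> sqrt (card (PiE (M - {m0}) E)) * spectral_norm M E T"
proof -
  let ?R = "PiE (M - {m0}) E" and ?s = "spectral_norm M E T"
  let ?fibre = "\<lambda>c. L2_set (\<lambda>j. T (c(m0 := j))) (E m0)"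
  have fibre: "?fibre c \<le> ?s" if "c \<in> ?R" for c
    by (rule fibre_L2_set_le_spectral_norm[OF M m0 that E])
  have "?R \<noteq> {}" using E(2) by (simp add: PiE_eq_empty_iff)
  then obtain c where "c \<in> ?R" by blast
  have s_nonneg: "0 \<le> ?s"
    using L2_set_nonneg fibre[OF \<open>c \<in> ?R\<close>] by (rule order_trans)
  have "(L2_set T (PiE M E))\<^sup>2 = (\<Sum>i\<in>PiE M E. (T i)\<^sup>2)"
    by (simp add: L2_set_def sum_nonneg)
  also have "\<dots> = (\<Sum>c\<in>?R. (?fibre c)\<^sup>2)"
    unfolding sum_PiE_split_coordinate[OF m0] by (simp add: L2_set_def sum_nonneg)
  also have "\<dots> \<le> (\<Sum>c\<in>?R. ?s\<^sup>2)"
  proof (rule sum_mono)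
    fix c assume "c \<in> ?R"
    show "(?fibre c)\<^sup>2 \<le> ?s\<^sup>2"
      using fibre[OF \<open>c \<in> ?R\<close>] L2_set_nonneg by (rule power_mono)
  qed
  also have "\<dots> = (sqrt (card ?R) * ?s)\<^sup>2"
    by (simp add: power_mult_distrib)
  finally show ?thesis
    by (rule power2_le_imp_le) (simp add: s_nonneg)
qed

definition block_of :: "'a set set \<Rightarrow> 'a \<Rightarrow> 'a set" where
  "block_of \<pi> r = (THE B. B \<in> \<pi> \<and> r \<in> B)"

lemma block_of_eq:
  assumes "partition_on X \<pi>" and "B \<in> \<pi>" and "r \<in> B"
  shows "block_of \<pi> r = B"
  unfolding block_of_def
proof (rule the_equality)
  show "B \<in> \<pi> \<and> r \<in> B" using assms(2,3) ..
  show "B' = B" if "B' \<in> \<pi> \<and> r \<in> B'" for B'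
    using that assms disjointD[OF partition_onD2[OF assms(1)]] by blast
qed

lemma block_of_mem:
  assumes "partition_on X \<pi>" and "r \<in> X"
  shows "block_of \<pi> r \<in> \<pi>" and "r \<in> block_of \<pi> r"
proof -
  obtain B where "B \<in> \<pi>" "r \<in> B" using assms partition_onD1 by blast
  then show "block_of \<pi> r \<in> \<pi>" and "r \<in> block_of \<pi> r"
    using block_of_eq[OF assms(1)] by simp_all
qed

lemma bij_betw_glue_blocks:
  assumes P: "partition_on X \<pi>"
  shows "bij_betw (\<lambda>I. \<lambda>r\<in>X. I (block_of \<pi> r) r) (PiE \<pi> (\<lambda>B. PiE B F)) (PiE X F)"
proof -
  let ?glue = "\<lambda>I. \<lambda>r\<in>X. I (block_of \<pi> r) r" and ?split = "\<lambda>a. \<lambda>B\<in>\<pi>. restrict a B"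
  let ?J = "PiE \<pi> (\<lambda>B. PiE B F)" and ?K = "PiE X F"
  have sub: "B \<subseteq> X" if "B \<in> \<pi>" for B
    using that partition_onD1[OF P] by blast
  note mem = block_of_mem[OF P]
  have glue: "?glue I \<in> ?K" if "I \<in> ?J" for I
  proof -
    have "I (block_of \<pi> r) r \<in> F r" if "r \<in> X" for r
      using \<open>I \<in> ?J\<close> mem[OF that] by blast
    then show ?thesis by (simp add: restrict_PiE_iff)
  qed
  have split: "?split a \<in> ?J" if "a \<in> ?K" for a
    using that sub by (force simp: restrict_PiE_iff)
  show ?thesis
  proof (rule bij_betw_byWitness[where f' = ?split])
    show "\<forall>I\<in>?J. ?split (?glue I) = I"
    proof
      fix I assume I: "I \<in> ?J"
      show "?split (?glue I) = I"
      proof (rule PiE_ext[OF split[OF glue[OF I]] I])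
        fix B assume B: "B \<in> \<pi>"
        have "restrict (?glue I) B = restrict (I B) B"
          using sub[OF B] block_of_eq[OF P B] by (intro restrict_ext) auto
        also have "\<dots> = I B"
          using I B by (intro extensional_restrict) (auto simp: PiE_iff)
        finally show "?split (?glue I) B = I B" using B by simp
      qed
    qed
    show "\<forall>a\<in>?K. ?glue (?split a) = a"
    proof
      fix a assume a: "a \<in> ?K"
      show "?glue (?split a) = a"
        by (rule PiE_ext[OF glue[OF split[OF a]] a]) (simp add: mem)
    qed
    show "?glue ` ?J \<subseteq> ?K" using glue by blast
    show "?split ` ?K \<subseteq> ?J" using split by blast
  qed
qed

lemma L2_set_unfold:
  assumes "partition_on {0..<k} \<pi>"
  shows "L2_set (unfold k \<pi> A) (PiE \<pi> (\<lambda>B. PiE B (\<lambda>_. {0..<d}))) = frobenius_norm k d A"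
proof -
  have "unfold k \<pi> A I = A (\<lambda>r\<in>{0..<k}. I (block_of \<pi> r) r)" for I
    by (simp add: unfold_def block_of_def restrict_def)
  then show ?thesis
    using sum.reindex_bij_betw[OF bij_betw_glue_blocks[OF assms], of "\<lambda>a. (A a)\<^sup>2" "\<lambda>_. {0..<d}"]
    by (simp add: L2_set_def frobenius_norm_def)
qed

lemma card_PiE_blocks_remove:
  assumes P: "partition_on X \<pi>" and X: "finite X" and B0: "B0 \<in> \<pi>"
  shows "card (PiE (\<pi> - {B0}) (\<lambda>B. PiE B (\<lambda>_. D))) = card D ^ (card X - card B0)"
proof -
  have fin: "finite \<pi>" using finite_elements[OF X P] .
  have finB: "finite B" if "B \<in> \<pi>" for B
    using that X partition_onD1[OF P] by (meson Union_upper finite_subset)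
  have "card X = card B0 + (\<Sum>B\<in>\<pi> - {B0}. card B)"
    using product_partition[OF P finB] sum.remove[OF fin B0] by simp
  moreover have "card (PiE (\<pi> - {B0}) (\<lambda>B. PiE B (\<lambda>_. D))) = (\<Prod>B\<in>\<pi> - {B0}. card D ^ card B)"
    using fin finB by (simp add: card_PiE)
  ultimately show ?thesis by (simp add: power_sum)
qed

lemma unfold_spectral_norm_le_frobenius_norm:
  assumes P: "partition_on {0..<k} \<pi>" and "d \<ge> 1"
  shows "unfold_spectral_norm k d \<pi> A \<le> frobenius_norm k d A"
proof -
  have "finite \<pi>" using finite_elements[OF _ P] by simp
  moreover have "finite (PiE B (\<lambda>_. {0..<d}))" if "B \<in> \<pi>" for B
    using that partition_onD1[OF P] by (intro finite_PiE) (auto intro: finite_subset)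
  moreover have "PiE B (\<lambda>_. {0..<d}) \<noteq> {}" for B :: "nat set"
    using \<open>d \<ge> 1\<close> by (simp add: PiE_eq_empty_iff)
  ultimately show ?thesis
    unfolding unfold_spectral_norm_def L2_set_unfold[OF P, symmetric] by (rule spectral_norm_le_L2_set)
qed

lemma frobenius_norm_le_unfold_spectral_norm:
  assumes P: "partition_on {0..<k} \<pi>" and "d \<ge> 1" and B: "B \<in> \<pi>"
  shows "frobenius_norm k d A \<le> sqrt (real d ^ (k - card B)) * unfold_spectral_norm k d \<pi> A"
proof -
  let ?E = "\<lambda>B. PiE B (\<lambda>_. {0..<d})"
  have "finite \<pi>" using finite_elements[OF _ P] by simp
  moreover have "finite (?E B)" if "B \<in> \<pi>" for B
    using that partition_onD1[OF P] by (intro finite_PiE) (auto intro: finite_subset)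
  moreover have "?E B \<noteq> {}" for B :: "nat set"
    using \<open>d \<ge> 1\<close> by (simp add: PiE_eq_empty_iff)
  ultimately have "L2_set (unfold k \<pi> A) (PiE \<pi> ?E)
      \<le> sqrt (card (PiE (\<pi> - {B}) ?E)) * spectral_norm \<pi> ?E (unfold k \<pi> A)"
    using B by (intro L2_set_le_spectral_norm)
  then show ?thesis
    by (simp add: L2_set_unfold[OF P] unfold_spectral_norm_def card_PiE_blocks_remove[OF P _ B])
qed

lemma powr_neg_half_mult_sqrt_power:
  fixes x :: real
  assumes "0 < x" and "n \<le> k"
  shows "x powr (- (real k - real n) / 2) * sqrt (x ^ (k - n)) = 1"
proof -
  have "x ^ (k - n) = x powr (real k - real n)"
    using assms by (subst powr_realpow[symmetric]) (simp_all add: of_nat_diff)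
  then have "sqrt (x ^ (k - n)) = x powr ((real k - real n) / 2)"
    using assms(1) by (simp add: powr_half_sqrt_powr)
  then show ?thesis
    using assms(1) by (simp add: powr_add[symmetric] add_divide_distrib[symmetric])
qed

theorem corollary4p13:
  fixes A :: "(nat \<Rightarrow> nat) \<Rightarrow> real" and d k l :: nat and \<pi> :: "nat set set"
  assumes "d \<ge> 1" and "1 \<le> l" and "l \<le> k" and "\<pi> \<in> partitions_into k l"
  shows "real d powr (- (real k - real (Max (card ` \<pi>))) / 2) * frobenius_norm k d A
           \<le> unfold_spectral_norm k d \<pi> A
         \<and> unfold_spectral_norm k d \<pi> A \<le> frobenius_norm k d A"
proof -
  have P: "partition_on {0..<k} \<pi>" and "card \<pi> = l"
    using assms(4) by (simp_all add: partitions_into_def)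
  then have "finite \<pi>" and "\<pi> \<noteq> {}" using assms(2) by (auto intro: finite_elements)
  then have "Max (card ` \<pi>) \<in> card ` \<pi>" by (intro Max_in) auto
  then obtain B where B: "B \<in> \<pi>" and m: "Max (card ` \<pi>) = card B" by auto
  have "B \<subseteq> {0..<k}" using B partition_onD1[OF P] by blast
  then have "card B \<le> k" using card_mono[of "{0..<k}" B] by simp
  let ?c = "real d powr (- (real k - real (card B)) / 2)" and ?s = "unfold_spectral_norm k d \<pi> A"
  have "?c * frobenius_norm k d A \<le> ?c * (sqrt (real d ^ (k - card B)) * ?s)"
    using frobenius_norm_le_unfold_spectral_norm[OF P assms(1) B] by (rule mult_left_mono) simp
  also have "\<dots> = ?s"
    using powr_neg_half_mult_sqrt_power[of "real d" "card B" k] assms(1) \<open>card B \<le> k\<close>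
    by (simp add: mult.assoc[symmetric])
  finally show ?thesis
    using unfold_spectral_norm_le_frobenius_norm[OF P assms(1)] unfolding m by blast
qed

end
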